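(* Let $k$ be a commutative ring and $A$ a unital involutive associative $k$-algebra. There is an isomorphism \[HO_0(A)\cong \frac{A}{(a_0a_1a_2-a_2\overline{a_1}a_0)},\] where $(a_0a_1a_2-a_2\overline{a_1}a_0)$ denotes the two-sided ideal of $A$ generated by all elements $a_0a_1a_2-a_2\overline{a_1}a_0$ with $a_0,a_1,a_2\in A$. In particular, $HO_0(A)$ has a ring structure induced from the ring structure of $A$.
   Context: An involutive $k$-algebra is a unital associative $k$-algebra with a $k$-linear map $a\mapsto\overline{a}$ with $\overline{\overline{a}}=a$, $\overline{ab}=\overline{b}\,\overline{a}$, $\overline 1=1$. Let $C_2=\{1,t\}$. The hyperoctahedral category $\Delta H$: objects $[n]=\{0,\dots,n\}$, $n\ge0$; a morphism $f:[n]\to[m]$ is a map of sets with a total order on each fibre and a $C_2$-label on each element of $[n]$; composition $g\circ f$ has fibre over $i$ equal to the concatenation, in the order of $g^{-1}(i)$, of the fibres $f^{-1}(j)$, each replaced by $f^{-1}(j)^t$ (order reversed, labels multiplied by $t$) when $j$ has label $t$ in $g$; labels multiply. The hyperoctahedral bar construction $\mathsf{H}_A:\Delta H\to\mathbf{Mod}_k$ sends $[n]\mapsto A^{\otimes(n+1)}$ and $f$ to $a_0\otimes\cdots\otimes a_n\mapsto b_0\otimes\cdots\otimes b_m$, $b_i$ being the ordered product over $x\in f^{-1}(i)$ of $a_x$ (label $1$) or $\overline{a_x}$ (label $t$), empty product $1_A$. Hyperoctahedral homology is $HO_n(A)=\mathrm{Tor}_n^{\Delta H}(k^{\star},\mathsf{H}_A)$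 with $k^{\star}$ the constant right $\Delta H$-module at $k$. *)

theory Defs
  imports Main "HOL-Library.Poly_Mapping" "HOL-Library.Set_Algebras"
begin

definition kalgebra :: "('k::comm_ring_1 \<Rightarrow> 'a::ring_1 \<Rightarrow> 'a) \<Rightarrow> bool" where
  "kalgebra smult \<longleftrightarrow>
     (\<forall>c a b. smult c (a + b) = smult c a + smult c b) \<and>
     (\<forall>c d a. smult (c + d) a = smult c a + smult d a) \<and>
     (\<forall>c d a. smult (c * d) a = smult c (smult d a)) \<and>
     (\<forall>a. smult 1 a = a) \<and>
     (\<forall>c a b. smult c (a * b) = smult c a * b) \<and>
     (\<forall>c a b. smult c (a * b) = a * smult c b)"

definition involution :: "('k::comm_ring_1 \<Rightarrow> 'a::ring_1 \<Rightarrow> 'a) \<Rightarrow> ('a \<Rightarrow> 'a) \<Rightarrow> bool" where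
  "involution smult bar \<longleftrightarrow>
     (\<forall>a b. bar (a + b) = bar a + bar b) \<and>
     (\<forall>c a. bar (smult c a) = smult c (bar a)) \<and>
     (\<forall>a. bar (bar a) = a) \<and>
     (\<forall>a b. bar (a * b) = bar b * bar a) \<and>
     bar 1 = 1"

text \<open>A morphism f : [n] \<rightarrow> [m] of \<Delta>H is encoded as a list of m+1 lists: the i-th list enumerates
 the fibre f^{-1}(i) in its total order, each element x paired with its C_2-label
 (True = t, False = 1).\<close>

definition DH_mor :: "nat \<Rightarrow> nat \<Rightarrow> (nat \<times> bool) list list \<Rightarrow> bool" where
  "DH_mor n m f \<longleftrightarrow> length f = Suc m \<and>
     distinct (map fst (concat f)) \<and> set (map fst (concat f)) = {0..n}"

text \<open>Action of H_A(f) on a pure tensor a_0 \<otimes> ... \<otimes> a_n (given as a list of length n+1).\<close>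

definition H_act :: "('a::ring_1 \<Rightarrow> 'a) \<Rightarrow> (nat \<times> bool) list list \<Rightarrow> 'a list \<Rightarrow> 'a list" where
  "H_act bar f as =
     map (\<lambda>L. prod_list (map (\<lambda>(x, t). if t then bar (as ! x) else as ! x) L)) f"

definition fsmult :: "'k::comm_ring_1 \<Rightarrow> ('b \<Rightarrow>\<^sub>0 'k) \<Rightarrow> ('b \<Rightarrow>\<^sub>0 'k)" where
  "fsmult c u = Poly_Mapping.map (\<lambda>v. c * v) u"

inductive_set kspan :: "('b \<Rightarrow>\<^sub>0 'k::comm_ring_1) set \<Rightarrow> ('b \<Rightarrow>\<^sub>0 'k) set"
  for S where
    kspan_zero: "0 \<in> kspan S"
  | kspan_gen: "s \<in> S \<Longrightarrow> s \<in> kspan S"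
  | kspan_add: "x \<in> kspan S \<Longrightarrow> y \<in> kspan S \<Longrightarrow> x + y \<in> kspan S"
  | kspan_smult: "x \<in> kspan S \<Longrightarrow> fsmult c x \<in> kspan S"

inductive_set two_sided_ideal :: "'a::ring_1 set \<Rightarrow> 'a set" for S where
    tsi_zero: "0 \<in> two_sided_ideal S"
  | tsi_gen: "s \<in> S \<Longrightarrow> s \<in> two_sided_ideal S"
  | tsi_add: "x \<in> two_sided_ideal S \<Longrightarrow> y \<in> two_sided_ideal S \<Longrightarrow> x + y \<in> two_sided_ideal S"
  | tsi_mult: "x \<in> two_sided_ideal S \<Longrightarrow> a * x * b \<in> two_sided_ideal S"

definition quot_set :: "'b::plus set \<Rightarrow> 'b set \<Rightarrow> 'b set set" where
  "quot_set M N = (\<lambda>x. x +o N) ` M"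

definition coset_smult :: "('k \<Rightarrow> 'b \<Rightarrow> 'b) \<Rightarrow> 'k \<Rightarrow> 'b::plus set \<Rightarrow> 'b set \<Rightarrow> 'b set" where
  "coset_smult sm c X N = (sm c ` X) + N"

text \<open>The k-module \<Oplus>_n A^{\<otimes>(n+1)} is presented as the free k-module on nonempty lists of
 elements of A modulo the multilinearity relations. HO_0(A) = Tor_0^{\<Delta>H}(k*, H_A)
 = k* \<otimes>_{\<Delta>H} H_A, which (k* being constant) is \<Oplus>_n H_A([n]) modulo the relations
 x \<sim> H_A(f)(x) for all morphisms f; it suffices to impose these on pure tensors.\<close>

definition HO_chains :: "('a list \<Rightarrow>\<^sub>0 'k::comm_ring_1) set" where
  "HO_chains = {u. \<forall>l \<in> Poly_Mapping.keys u. l \<noteq> []}"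

definition multilin_rel :: "('k::comm_ring_1 \<Rightarrow> 'a::ring_1 \<Rightarrow> 'a) \<Rightarrow> ('a list \<Rightarrow>\<^sub>0 'k) set" where
  "multilin_rel smult =
     {Poly_Mapping.single (xs @ (a + b) # ys) 1 - Poly_Mapping.single (xs @ a # ys) 1
        - Poly_Mapping.single (xs @ b # ys) 1 | xs ys a b. True}
   \<union> {Poly_Mapping.single (xs @ smult c a # ys) 1 - fsmult c (Poly_Mapping.single (xs @ a # ys) 1)
        | xs ys a c. True}"

definition functor_rel :: "('a::ring_1 \<Rightarrow> 'a) \<Rightarrow> ('a list \<Rightarrow>\<^sub>0 'k::comm_ring_1) set" where
  "functor_rel bar =
     {Poly_Mapping.single as 1 - Poly_Mapping.single (H_act bar f as) 1
        | n m f as. DH_mor n m f \<and> length as = Suc n}"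

definition HO0_rel :: "('k::comm_ring_1 \<Rightarrow> 'a::ring_1 \<Rightarrow> 'a) \<Rightarrow> ('a \<Rightarrow> 'a) \<Rightarrow> ('a list \<Rightarrow>\<^sub>0 'k) set" where
  "HO0_rel smult bar = kspan (multilin_rel smult \<union> functor_rel bar)"

definition HO0 :: "('k::comm_ring_1 \<Rightarrow> 'a::ring_1 \<Rightarrow> 'a) \<Rightarrow> ('a \<Rightarrow> 'a) \<Rightarrow> ('a list \<Rightarrow>\<^sub>0 'k) set set" where
  "HO0 smult bar = quot_set HO_chains (HO0_rel smult bar)"

definition HO_ideal :: "('a::ring_1 \<Rightarrow> 'a) \<Rightarrow> 'a set" where
  "HO_ideal bar = two_sided_ideal {a0 * a1 * a2 - a2 * bar a1 * a0 | a0 a1 a2. True}"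

end

(*
  Multiplying out tensors, \<open>\<Sum> c\<^sub>l [l] \<mapsto> \<Sum> c\<^sub>l \<Prod>l\<close>, is a k-linear map from chains onto A.
  It kills the multilinearity relations, and it sends each functoriality relation
  \<open>a - H\<^sub>A(f)(a)\<close> into the ideal, because modulo the ideal A is commutative and the
  involution is trivial. Conversely, via the morphisms \<open>[n] \<rightarrow> [0]\<close> every chain is congruent
  to the one-factor chain of its product, and two morphisms \<open>[4] \<rightarrow> [0]\<close> show that the
  one-factor chains of the ideal are relations. Hence the map induces the isomorphism.
*)

theory Submission
  imports Defs "HOL.Modules" "HOL-Library.Multiset"
begin

lemma lookup_fsmult [simp]: "Poly_Mapping.lookup (fsmult c u) l = c * Poly_Mapping.lookup u l"
  unfolding fsmult_def by transfer (simp add: when_def)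

lemma fsmult_single [simp]: "fsmult c (Poly_Mapping.single l 1) = Poly_Mapping.single l c"
  unfolding fsmult_def by simp

lemma keys_fsmult: "Poly_Mapping.keys (fsmult c u) \<subseteq> Poly_Mapping.keys u"
  by (auto simp: in_keys_iff)

lemma sum_single_lookup: "(\<Sum>l\<in>Poly_Mapping.keys u. Poly_Mapping.single l (Poly_Mapping.lookup u l)) = u"
  by (rule poly_mapping_eqI) (simp add: lookup_sum lookup_single when_def in_keys_iff)

lemma prod_list_concat: "prod_list (concat xss) = prod_list (map prod_list xss)"
  by (induction xss) auto

interpretation fsmult: module "fsmult :: 'k::comm_ring_1 \<Rightarrow> ('b \<Rightarrow>\<^sub>0 'k) \<Rightarrow> _"
  by unfold_locales (auto intro!: poly_mapping_eqI simp: lookup_add algebra_simps)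

lemma kspan_eq_span: "kspan S = fsmult.span S"
proof
  show "kspan S \<subseteq> fsmult.span S"
  proof
    fix x assume "x \<in> kspan S"
    then show "x \<in> fsmult.span S"
      by induction (auto intro: fsmult.span_clauses)
  qed
  have "fsmult.subspace (kspan S)"
    by (auto simp: fsmult.subspace_def intro: kspan.intros)
  then show "fsmult.span S \<subseteq> kspan S"
    by (intro fsmult.span_minimal) (auto intro: kspan_gen)
qed

lemma mem_coset_iff: "(z::'b::ab_group_add) \<in> x +o N \<longleftrightarrow> z - x \<in> N"
  by (auto simp: elt_set_plus_def) (metis add_diff_cancel_left' diff_add_cancel add.commute)

context module
begin

lemma coset_eq_iff:
  assumes "subspace N"
  shows "x +o N = y +o N \<longleftrightarrow> x - y \<in> N"
proof
  assume "x +o N = y +o N"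
  moreover have "x \<in> x +o N"
    using assms by (simp add: mem_coset_iff subspace_0)
  ultimately show "x - y \<in> N"
    by (simp add: mem_coset_iff)
next
  assume xy: "x - y \<in> N"
  show "x +o N = y +o N"
  proof (rule set_eqI)
    fix z
    have "z - x = (z - y) - (x - y)" "z - y = (z - x) + (x - y)"
      by simp_all
    then show "z \<in> x +o N \<longleftrightarrow> z \<in> y +o N"
      using xy assms by (metis mem_coset_iff subspace_add subspace_diff)
  qed
qed

lemma subspace_set_plus_self: "subspace N \<Longrightarrow> N + N = N"
  by (auto simp: set_plus_def subspace_add) (metis add_0_right subspace_0)

lemma coset_plus: "subspace N \<Longrightarrow> (x +o N) + (y +o N) = (x + y) +o N"
  by (simp add: set_plus_rearrange subspace_set_plus_self)

end

lemma (in module_hom) image_coset: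
  assumes N: "m1.subspace N" and N': "m2.subspace N'" and f_N: "f ` N \<subseteq> N'"
  shows "f ` (x +o N) + N' = f x +o N'"
proof (rule set_eqI)
  fix z
  show "z \<in> f ` (x +o N) + N' \<longleftrightarrow> z \<in> f x +o N'"
  proof
    assume "z \<in> f ` (x +o N) + N'"
    then obtain n n' where "n \<in> N" "n' \<in> N'" "z = f (x + n) + n'"
      by (auto simp: set_plus_def elt_set_plus_def)
    then show "z \<in> f x +o N'"
      using N' f_N by (auto simp: mem_coset_iff add m2.subspace_add)
  next
    assume "z \<in> f x +o N'"
    moreover have "f x \<in> f ` (x +o N)"
      using N by (simp add: mem_coset_iff m1.subspace_0)
    ultimately show "z \<in> f ` (x +o N) + N'"
      by (metis mem_coset_iff add.commute diff_add_cancel set_plus_intro)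
  qed
qed

lemma (in module) coset_smult_coset:
  assumes "subspace N"
  shows "coset_smult scale c (x +o N) N = scale c x +o N"
proof -
  interpret scale_c: module_hom scale scale "scale c"
    by unfold_locales (simp_all add: scale_right_distrib mult.commute)
  show ?thesis
    unfolding coset_smult_def using assms
    by (intro scale_c.image_coset) (auto simp: subspace_scale)
qed

lemma (in module_hom) induced_quotient_iso:
  assumes N: "m1.subspace N" and N': "m2.subspace N'" and f_N: "f ` N \<subseteq> N'"
    and section_mem: "\<And>a. \<sigma> a \<in> M" and section_inv: "\<And>a. f (\<sigma> a) = a"
    and section_cong: "\<And>a b. a - b \<in> N' \<Longrightarrow> \<sigma> a - \<sigma> b \<in> N"
    and retract: "\<And>x. x \<in> M \<Longrightarrow> x - \<sigma> (f x) \<in> N"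
  shows "\<exists>\<Phi>. bij_betw \<Phi> (quot_set M N) (quot_set UNIV N') \<and>
     (\<forall>X \<in> quot_set M N. \<forall>Y \<in> quot_set M N. \<Phi> (X + Y) = \<Phi> X + \<Phi> Y) \<and>
     (\<forall>c. \<forall>X \<in> quot_set M N. \<Phi> (coset_smult s1 c X N) = coset_smult s2 c (\<Phi> X) N')"
proof -
  define \<Phi> where "\<Phi> X = f ` X + N'" for X
  have \<Phi>_coset: "\<Phi> (x +o N) = f x +o N'" for x
    unfolding \<Phi>_def using N N' f_N by (rule image_coset)
  have "inj_on \<Phi> (quot_set M N)"
  proof (rule inj_onI)
    fix X Y assume "X \<in> quot_set M N" "Y \<in> quot_set M N" "\<Phi> X = \<Phi> Y"
    then obtain x y where xy: "x \<in> M" "y \<in> M" "X = x +o N" "Y = y +o N" "f x - f y \<in> N'"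
      unfolding quot_set_def by (auto simp: \<Phi>_coset m2.coset_eq_iff[OF N'])
    have "x - y = (x - \<sigma> (f x)) - (y - \<sigma> (f y)) + (\<sigma> (f x) - \<sigma> (f y))"
      by simp
    also have "\<dots> \<in> N"
      using xy N by (intro m1.subspace_add m1.subspace_diff retract section_cong)
    finally show "X = Y"
      using xy by (simp add: m1.coset_eq_iff[OF N])
  qed
  moreover have "\<Phi> ` quot_set M N = quot_set UNIV N'"
  proof
    show "\<Phi> ` quot_set M N \<subseteq> quot_set UNIV N'"
      by (auto simp: quot_set_def \<Phi>_coset)
    show "quot_set UNIV N' \<subseteq> \<Phi> ` quot_set M N"
    proof
      fix Z assume "Z \<in> quot_set UNIV N'"
      then obtain a where "Z = \<Phi> (\<sigma> a +o N)"
        by (auto simp: quot_set_def \<Phi>_coset section_inv)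
      then show "Z \<in> \<Phi> ` quot_set M N"
        using section_mem by (auto simp: quot_set_def)
    qed
  qed
  moreover have "\<Phi> (X + Y) = \<Phi> X + \<Phi> Y" if X: "X \<in> quot_set M N" and Y: "Y \<in> quot_set M N" for X Y
  proof -
    obtain x y where "X = x +o N" "Y = y +o N"
      using X Y unfolding quot_set_def by blast
    then show ?thesis
      using N N' by (simp add: \<Phi>_coset m1.coset_plus m2.coset_plus add)
  qed
  moreover have "\<Phi> (coset_smult s1 c X N) = coset_smult s2 c (\<Phi> X) N'"
    if X: "X \<in> quot_set M N" for c X
  proof -
    obtain x where "X = x +o N"
      using X unfolding quot_set_def by blast
    then show ?thesis
      using N N' by (simp add: \<Phi>_coset m1.coset_smult_coset m2.coset_smult_coset scale)
  qed
  ultimately show ?thesis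
    by (intro exI[of _ \<Phi>] conjI ballI allI) (simp_all add: bij_betw_def)
qed

definition chain_prod :: "('k::comm_ring_1 \<Rightarrow> 'a::ring_1 \<Rightarrow> 'a) \<Rightarrow> ('a list \<Rightarrow>\<^sub>0 'k) \<Rightarrow> 'a" where
  "chain_prod smult u = (\<Sum>l\<in>Poly_Mapping.keys u. smult (Poly_Mapping.lookup u l) (prod_list l))"

abbreviation deg0_chain :: "'a \<Rightarrow> ('a list \<Rightarrow>\<^sub>0 'k::comm_ring_1)" where
  "deg0_chain a \<equiv> Poly_Mapping.single [a] 1"

locale involutive_algebra =
  fixes smult :: "'k::comm_ring_1 \<Rightarrow> 'a::ring_1 \<Rightarrow> 'a" and bar :: "'a \<Rightarrow> 'a"
  assumes kalgebra: "kalgebra smult" and involution: "involution smult bar"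

sublocale involutive_algebra \<subseteq> module smult
  using kalgebra unfolding kalgebra_def by unfold_locales simp_all

context involutive_algebra
begin

lemma smult_mult_left: "smult c (a * b) = smult c a * b"
  and smult_mult_right: "smult c (a * b) = a * smult c b"
  using kalgebra unfolding kalgebra_def by blast+

lemma bar_one: "bar 1 = 1"
  using involution unfolding involution_def by blast

lemma HO_ideal_mult: "x \<in> HO_ideal bar \<Longrightarrow> a * x * b \<in> HO_ideal bar"
  unfolding HO_ideal_def by (rule tsi_mult)

lemma subspace_HO_ideal: "subspace (HO_ideal bar)"
proof -
  have "smult c x \<in> HO_ideal bar" if "x \<in> HO_ideal bar" for c x
    using HO_ideal_mult[OF that, of "smult c 1" 1] by (simp add: smult_mult_left[symmetric])
  then show ?thesis
    unfolding subspace_def HO_ideal_def by (blast intro: tsi_zero tsi_add)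
qed

lemma HO_ideal_generator: "a0 * a1 * a2 - a2 * bar a1 * a0 \<in> HO_ideal bar"
  unfolding HO_ideal_def by (rule tsi_gen) blast

lemma HO_ideal_commutator: "x * y - y * x \<in> HO_ideal bar"
  using HO_ideal_generator[of x 1 y] by (simp add: bar_one)

lemma HO_ideal_bar: "bar a - a \<in> HO_ideal bar"
  using subspace_neg[OF subspace_HO_ideal HO_ideal_generator[of 1 a 1]] by simp

lemma HO_ideal_mult_cong:
  assumes "a - b \<in> HO_ideal bar" and "c - d \<in> HO_ideal bar"
  shows "a * c - b * d \<in> HO_ideal bar"
proof -
  have "a * c - b * d = 1 * (a - b) * c + b * (c - d) * 1"
    by (simp add: algebra_simps)
  then show ?thesis
    using assms by (metis HO_ideal_mult subspace_add subspace_HO_ideal)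
qed

lemma HO_ideal_prod_list_cong:
  "(\<And>p. p \<in> set ps \<Longrightarrow> g p - g' p \<in> HO_ideal bar) \<Longrightarrow>
     prod_list (map g ps) - prod_list (map g' ps) \<in> HO_ideal bar"
  by (induction ps) (auto simp: subspace_0[OF subspace_HO_ideal] intro: HO_ideal_mult_cong)

lemma HO_ideal_prod_list_perm:
  "mset xs = mset ys \<Longrightarrow> prod_list xs - prod_list ys \<in> HO_ideal bar"
proof (induction xs arbitrary: ys)
  case Nil
  then show ?case
    by (simp add: subspace_0[OF subspace_HO_ideal])
next
  case (Cons x xs)
  then obtain ys1 ys2 where ys: "ys = ys1 @ x # ys2"
    by (metis list.set_intros(1) set_mset_mset split_list)
  let ?p1 = "prod_list ys1" and ?p2 = "prod_list ys2"
  have "prod_list xs - prod_list (ys1 @ ys2) \<in> HO_ideal bar"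
    using Cons.prems ys by (intro Cons.IH) simp
  then have "x * prod_list xs - x * prod_list (ys1 @ ys2) \<in> HO_ideal bar"
    by (intro HO_ideal_mult_cong) (simp_all add: subspace_0[OF subspace_HO_ideal])
  moreover have "1 * (x * ?p1 - ?p1 * x) * ?p2 \<in> HO_ideal bar"
    by (intro HO_ideal_mult HO_ideal_commutator)
  moreover have "prod_list (x # xs) - prod_list ys
      = (x * prod_list xs - x * prod_list (ys1 @ ys2)) + 1 * (x * ?p1 - ?p1 * x) * ?p2"
    using ys by (simp add: algebra_simps)
  ultimately show ?case
    by (metis subspace_add[OF subspace_HO_ideal])
qed

text \<open>Modulo the ideal, \<open>A\<close> is commutative and \<open>bar\<close> is the identity, so every morphism of
  \<open>\<Delta>H\<close> preserves the product of all tensor factors.\<close>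

lemma HO_ideal_H_act:
  assumes f: "DH_mor n m f" and as: "length as = Suc n"
  shows "prod_list as - prod_list (H_act bar f as) \<in> HO_ideal bar"
proof -
  define labelled where "labelled = (\<lambda>(x::nat, t). if t then bar (as ! x) else as ! x)"
  let ?unlabelled = "\<lambda>p. as ! fst p"
  have H_act: "prod_list (H_act bar f as) = prod_list (map labelled (concat f))"
    unfolding H_act_def labelled_def by (simp add: prod_list_concat map_concat o_def)
  have labels: "prod_list (map labelled (concat f)) - prod_list (map ?unlabelled (concat f))
      \<in> HO_ideal bar"
    by (rule HO_ideal_prod_list_cong)
      (auto simp: labelled_def HO_ideal_bar subspace_0[OF subspace_HO_ideal])
  have "distinct (map fst (concat f))" "set (map fst (concat f)) = set [0..<Suc n]"
    using f unfolding DH_mor_def by auto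
  then have fibres: "mset (map fst (concat f)) = mset [0..<Suc n]"
    using set_eq_iff_mset_eq_distinct distinct_upt by blast
  have "mset (map ?unlabelled (concat f)) = image_mset ((!) as) (mset (map fst (concat f)))"
    by (simp add: multiset.map_comp o_def)
  also have "\<dots> = mset as"
    unfolding fibres mset_map[symmetric] using as map_nth[of as] by simp
  finally have "mset as = mset (map ?unlabelled (concat f))"
    by (rule sym)
  then have perm: "prod_list as - prod_list (map ?unlabelled (concat f)) \<in> HO_ideal bar"
    by (rule HO_ideal_prod_list_perm)
  have "prod_list as - prod_list (H_act bar f as)
      = (prod_list as - prod_list (map ?unlabelled (concat f)))
        - (prod_list (map labelled (concat f)) - prod_list (map ?unlabelled (concat f)))"
    by (simp add: H_act)
  then show ?thesis
    using subspace_diff[OF subspace_HO_ideal perm labels] by simp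
qed

lemma chain_prod_eq_sum:
  assumes "finite S" and "Poly_Mapping.keys u \<subseteq> S"
  shows "chain_prod smult u = (\<Sum>l\<in>S. smult (Poly_Mapping.lookup u l) (prod_list l))"
  unfolding chain_prod_def
  by (rule sum.mono_neutral_right[symmetric]) (use assms in \<open>auto simp: in_keys_iff\<close>)

lemma chain_prod_add: "chain_prod smult (u + v) = chain_prod smult u + chain_prod smult v"
proof -
  let ?S = "Poly_Mapping.keys u \<union> Poly_Mapping.keys v"
  have "finite ?S" and "Poly_Mapping.keys (u + v) \<subseteq> ?S"
    using keys_add[of u v] by auto
  then show ?thesis
    by (simp add: chain_prod_eq_sum[of ?S] lookup_add scale_left_distrib sum.distrib)
qed

lemma chain_prod_fsmult: "chain_prod smult (fsmult c u) = smult c (chain_prod smult u)"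
  using keys_fsmult[of c u]
  by (simp add: chain_prod_eq_sum[of "Poly_Mapping.keys u"] scale_sum_right)

lemma chain_prod_single [simp]: "chain_prod smult (Poly_Mapping.single l c) = smult c (prod_list l)"
  by (simp add: chain_prod_eq_sum[of "{l}"])

sublocale chain_prod: module_hom fsmult smult "chain_prod smult"
  by (simp add: module_hom_iff fsmult.module_axioms module_axioms chain_prod_add chain_prod_fsmult)

lemma subspace_HO0_rel: "fsmult.subspace (HO0_rel smult bar)"
  by (simp add: HO0_rel_def kspan_eq_span)

lemma chain_prod_multilin_rel: "s \<in> multilin_rel smult \<Longrightarrow> chain_prod smult s = 0"
proof (unfold multilin_rel_def, elim UnE CollectE exE conjE)
  fix xs ys a b
  assume "s = Poly_Mapping.single (xs @ (a + b) # ys) 1 - Poly_Mapping.single (xs @ a # ys) 1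
    - Poly_Mapping.single (xs @ b # ys) 1"
  then show "chain_prod smult s = 0"
    by (simp add: chain_prod.diff distrib_left distrib_right)
next
  fix xs ys a c
  assume "s = Poly_Mapping.single (xs @ smult c a # ys) 1 - fsmult c (Poly_Mapping.single (xs @ a # ys) 1)"
  moreover have "smult c (prod_list xs * (a * prod_list ys)) = prod_list xs * (smult c a * prod_list ys)"
    by (metis smult_mult_left smult_mult_right)
  ultimately show "chain_prod smult s = 0"
    by (simp add: chain_prod.diff chain_prod.scale)
qed

lemma chain_prod_functor_rel: "s \<in> functor_rel bar \<Longrightarrow> chain_prod smult s \<in> HO_ideal bar"
  unfolding functor_rel_def by (auto simp: chain_prod.diff HO_ideal_H_act)

lemma chain_prod_HO0_rel: "chain_prod smult ` HO0_rel smult bar \<subseteq> HO_ideal bar"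
proof -
  have "multilin_rel smult \<union> functor_rel bar \<subseteq> chain_prod smult -` HO_ideal bar"
    using chain_prod_multilin_rel chain_prod_functor_rel subspace_0[OF subspace_HO_ideal] by auto
  then have "fsmult.span (multilin_rel smult \<union> functor_rel bar) \<subseteq> chain_prod smult -` HO_ideal bar"
    by (rule fsmult.span_minimal) (rule chain_prod.subspace_vimage[OF subspace_HO_ideal])
  then show ?thesis
    unfolding HO0_rel_def kspan_eq_span by blast
qed

lemma HO0_rel_deg0_add: "deg0_chain (a + b) - deg0_chain a - deg0_chain b \<in> HO0_rel smult bar"
proof -
  have "Poly_Mapping.single ([] @ (a + b) # []) 1 - Poly_Mapping.single ([] @ a # []) 1
      - Poly_Mapping.single ([] @ b # []) 1 \<in> multilin_rel smult"
    unfolding multilin_rel_def by blast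
  then show ?thesis
    unfolding HO0_rel_def by (auto intro: kspan_gen)
qed

lemma HO0_rel_deg0_smult: "deg0_chain (smult c a) - fsmult c (deg0_chain a) \<in> HO0_rel smult bar"
proof -
  have "Poly_Mapping.single ([] @ smult c a # []) 1 - fsmult c (Poly_Mapping.single ([] @ a # []) 1)
      \<in> multilin_rel smult"
    unfolding multilin_rel_def by blast
  then show ?thesis
    unfolding HO0_rel_def by (auto intro: kspan_gen)
qed

lemma HO0_rel_functor:
  "DH_mor n m f \<Longrightarrow> length as = Suc n \<Longrightarrow>
     Poly_Mapping.single as 1 - Poly_Mapping.single (H_act bar f as) 1 \<in> HO0_rel smult bar"
  unfolding HO0_rel_def functor_rel_def by (rule kspan_gen) blast

lemma HO0_rel_prod_list:
  assumes "l \<noteq> []"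
  shows "Poly_Mapping.single l 1 - deg0_chain (prod_list l) \<in> HO0_rel smult bar"
proof -
  define f where "f = [map (\<lambda>i. (i, False)) [0..<length l]]"
  have "DH_mor (length l - 1) 0 f"
    using assms unfolding DH_mor_def f_def by (cases l) (auto simp: o_def less_Suc_eq_le)
  moreover have "H_act bar f l = [prod_list l]"
    unfolding H_act_def f_def by (simp add: o_def map_nth)
  ultimately show ?thesis
    using HO0_rel_functor[of "length l - 1" 0 f l] assms by simp
qed

lemma HO0_rel_deg0_diff_iff:
  "deg0_chain (a - b) \<in> HO0_rel smult bar \<longleftrightarrow> deg0_chain a - deg0_chain b \<in> HO0_rel smult bar"
proof -
  let ?e = "deg0_chain a - deg0_chain (a - b) - deg0_chain b"
  have e: "?e \<in> HO0_rel smult bar"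
    using HO0_rel_deg0_add[of "a - b" b] by simp
  have "deg0_chain a - deg0_chain b = deg0_chain (a - b) + ?e"
    and "deg0_chain (a - b) = (deg0_chain a - deg0_chain b) - ?e"
    by (simp_all add: algebra_simps)
  then show ?thesis
    using e fsmult.subspace_add[OF subspace_HO0_rel] fsmult.subspace_diff[OF subspace_HO0_rel]
    by metis
qed

text \<open>The two morphisms \<open>[4] \<rightarrow> [0]\<close> of \<open>\<Delta>H\<close> with fibres \<open>0 < 1 < 2 < 3 < 4\<close> and
  \<open>0 < 3 < 2 < 1 < 4\<close>, the point \<open>2\<close> labelled \<open>t\<close> in the second, identify both monomials
  with \<open>x \<otimes> a\<^sub>0 \<otimes> a\<^sub>1 \<otimes> a\<^sub>2 \<otimes> y\<close>.\<close>

lemma HO0_rel_deg0_relator: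
  "deg0_chain (x * a0 * a1 * a2 * y) - deg0_chain (x * a2 * bar a1 * a0 * y) \<in> HO0_rel smult bar"
proof -
  let ?as = "[x, a0, a1, a2, y]"
  have "DH_mor 4 0 [[(0, False), (3, False), (2, True), (1, False), (4, False)]]"
    unfolding DH_mor_def by (auto simp: atLeastAtMost_iff)
  from HO0_rel_functor[OF this, of ?as]
  have "Poly_Mapping.single ?as 1 - deg0_chain (x * a2 * bar a1 * a0 * y) \<in> HO0_rel smult bar"
    by (simp add: H_act_def mult.assoc)
  moreover have "Poly_Mapping.single ?as 1 - deg0_chain (x * a0 * a1 * a2 * y) \<in> HO0_rel smult bar"
    using HO0_rel_prod_list[of ?as] by (simp add: mult.assoc)
  ultimately have "(Poly_Mapping.single ?as 1 - deg0_chain (x * a2 * bar a1 * a0 * y))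
      - (Poly_Mapping.single ?as 1 - deg0_chain (x * a0 * a1 * a2 * y)) \<in> HO0_rel smult bar"
    by (rule fsmult.subspace_diff[OF subspace_HO0_rel])
  then show ?thesis
    by (simp add: algebra_simps)
qed

lemma HO0_rel_deg0_HO_ideal:
  assumes "r \<in> HO_ideal bar"
  shows "deg0_chain r \<in> HO0_rel smult bar"
proof -
  have "deg0_chain (x * r * y) \<in> HO0_rel smult bar" for x y
    using assms unfolding HO_ideal_def
  proof (induction r arbitrary: x y rule: two_sided_ideal.induct)
    case tsi_zero
    show ?case
      using HO0_rel_deg0_diff_iff[of 0 0] fsmult.subspace_0[OF subspace_HO0_rel] by simp
  next
    case (tsi_gen s)
    then obtain a0 a1 a2 where s: "s = a0 * a1 * a2 - a2 * bar a1 * a0"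
      by blast
    have "x * s * y = x * a0 * a1 * a2 * y - x * a2 * bar a1 * a0 * y"
      unfolding s by (simp add: algebra_simps)
    then show ?case
      using HO0_rel_deg0_relator HO0_rel_deg0_diff_iff by simp
  next
    case (tsi_add r1 r2)
    have "deg0_chain (x * (r1 + r2) * y)
        = (deg0_chain (x * r1 * y + x * r2 * y) - deg0_chain (x * r1 * y) - deg0_chain (x * r2 * y))
          + deg0_chain (x * r1 * y) + deg0_chain (x * r2 * y)"
      by (simp add: algebra_simps)
    then show ?case
      using HO0_rel_deg0_add tsi_add.IH fsmult.subspace_add[OF subspace_HO0_rel] by metis
  next
    case (tsi_mult r a b)
    then show ?case
      using tsi_mult.IH[of "x * a" "b * y"] by (simp add: mult.assoc)
  qed
  from this[of 1 1] show ?thesis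
    by simp
qed

text \<open>The chains congruent to their product form a submodule containing all monomials.\<close>

lemma HO0_rel_chain_prod:
  assumes "u \<in> HO_chains"
  shows "u - deg0_chain (chain_prod smult u) \<in> HO0_rel smult bar"
proof -
  let ?R = "{u. u - deg0_chain (chain_prod smult u) \<in> HO0_rel smult bar}"
  note N = subspace_HO0_rel
  have "fsmult.subspace ?R"
  proof (unfold fsmult.subspace_def, intro conjI ballI allI)
    show "0 \<in> ?R"
      using HO0_rel_deg0_diff_iff[of 0 0] fsmult.subspace_0[OF N] fsmult.subspace_neg[OF N]
      by fastforce
  next
    fix u v assume u: "u \<in> ?R" and v: "v \<in> ?R"
    have "(u - deg0_chain (chain_prod smult u)) + (v - deg0_chain (chain_prod smult v))
        - (deg0_chain (chain_prod smult u + chain_prod smult v)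
           - deg0_chain (chain_prod smult u) - deg0_chain (chain_prod smult v)) \<in> HO0_rel smult bar"
      by (rule fsmult.subspace_diff[OF N], rule fsmult.subspace_add[OF N])
        (use u v HO0_rel_deg0_add in auto)
    then show "u + v \<in> ?R"
      by (simp add: chain_prod.add algebra_simps)
  next
    fix c u assume u: "u \<in> ?R"
    have "fsmult c (u - deg0_chain (chain_prod smult u))
        - (deg0_chain (smult c (chain_prod smult u)) - fsmult c (deg0_chain (chain_prod smult u)))
        \<in> HO0_rel smult bar"
      by (rule fsmult.subspace_diff[OF N], rule fsmult.subspace_scale[OF N])
        (use u HO0_rel_deg0_smult in auto)
    then show "fsmult c u \<in> ?R"
      by (simp add: chain_prod.scale fsmult.scale_right_diff_distrib)
  qed
  moreover have "{Poly_Mapping.single l 1 | l. l \<noteq> []} \<subseteq> ?R"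
    using HO0_rel_prod_list by auto
  ultimately have "fsmult.span {Poly_Mapping.single l 1 | l. l \<noteq> []} \<subseteq> ?R"
    by (intro fsmult.span_minimal)
  moreover have "u = (\<Sum>l\<in>Poly_Mapping.keys u. fsmult (Poly_Mapping.lookup u l) (Poly_Mapping.single l 1))"
    by (simp add: sum_single_lookup)
  then have "u \<in> fsmult.span {Poly_Mapping.single l 1 | l. l \<noteq> []}"
    using assms unfolding HO_chains_def
    by (metis (mono_tags, lifting) fsmult.span_base fsmult.span_scale fsmult.span_sum mem_Collect_eq)
  ultimately show ?thesis
    by blast
qed

end

theorem theorem5p8:
  fixes smult :: "'k::comm_ring_1 \<Rightarrow> 'a::ring_1 \<Rightarrow> 'a" and bar :: "'a \<Rightarrow> 'a"
  assumes "kalgebra smult" and "involution smult bar"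
  shows "\<exists>\<Phi>. bij_betw \<Phi> (HO0 smult bar) (quot_set UNIV (HO_ideal bar)) \<and>
     (\<forall>X \<in> HO0 smult bar. \<forall>Y \<in> HO0 smult bar. \<Phi> (X + Y) = \<Phi> X + \<Phi> Y) \<and>
     (\<forall>c. \<forall>X \<in> HO0 smult bar.
        \<Phi> (coset_smult fsmult c X (HO0_rel smult bar)) = coset_smult smult c (\<Phi> X) (HO_ideal bar))"
proof -
  interpret involutive_algebra smult bar
    using assms by unfold_locales
  have "deg0_chain a - deg0_chain b \<in> HO0_rel smult bar" if "a - b \<in> HO_ideal bar" for a b
    using HO0_rel_deg0_HO_ideal[OF that] HO0_rel_deg0_diff_iff by blast
  then show ?thesis
    unfolding HO0_def
    by (intro chain_prod.induced_quotient_iso[where \<sigma> = deg0_chain])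
      (simp_all add: subspace_HO0_rel subspace_HO_ideal chain_prod_HO0_rel HO0_rel_chain_prod
        HO_chains_def)
qed

end
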